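(* For every positive integer $\alpha$ and every integer $k>1$, $$N_\alpha(k,k)\le (k^3-k^2+k)\binom{k}{2}.$$
   Context: A $k$-power is a word $u^k=uu\cdots u$ ($k$ copies) for a nonempty word $u$. A $k$-anti-power is a word $w=w_1\cdots w_k$ with $|w_1|=\cdots=|w_k|$ and $w_1,\dots,w_k$ pairwise distinct. $N_\alpha(k,k)$ denotes the smallest positive integer $N$ such that every word of length $N$ over an alphabet of size $\alpha$ contains a factor (contiguous subword) that is a $k$-power or a $k$-anti-power. *)

theory Defs
  imports Main
begin

definition is_power :: "nat \<Rightarrow> 'a list \<Rightarrow> bool" where
  "is_power k w \<longleftrightarrow> (\<exists>u. u \<noteq> [] \<and> w = concat (replicate k u))"

definition is_antipower :: "nat \<Rightarrow> 'a list \<Rightarrow> bool" where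
  "is_antipower k w \<longleftrightarrow> (\<exists>ws m. length ws = k \<and> (\<forall>x\<in>set ws. length x = m)
      \<and> distinct ws \<and> w = concat ws)"

definition is_factor :: "'a list \<Rightarrow> 'a list \<Rightarrow> bool" where
  "is_factor u w \<longleftrightarrow> (\<exists>p s. w = p @ u @ s)"

definition N_pow_anti :: "nat \<Rightarrow> nat \<Rightarrow> nat" where
  "N_pow_anti alpha k = (LEAST N. N > 0 \<and>
     (\<forall>w. length w = N \<and> set w \<subseteq> {..<alpha} \<longrightarrow>
        (\<exists>u. is_factor u w \<and> (is_power k u \<or> is_antipower k u))))"

end

theory Submission
  imports Defs
begin

text \<open>
  Let \<open>n = k choose 2\<close> and \<open>A = n (k - 1)\<^sup>2\<close>, and let \<open>w\<close> be a word of length at least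
  \<open>k (A + n)\<close> without \<open>k\<close>-powers and \<open>k\<close>-anti-powers. For each of the \<open>n + 1\<close> block lengths
  \<open>m \<in> {A..A+n}\<close> the prefix of length \<open>k m\<close> is not an anti-power, so two of its \<open>k\<close> blocks of
  length \<open>m\<close>, say blocks \<open>i < j\<close>, coincide. There are only \<open>n\<close> pairs \<open>(i, j)\<close>, so some pair
  serves two lengths \<open>m < m + t\<close>. Composing the two coincidences, which shift by \<open>(j - i) m\<close>
  and by \<open>(j - i) (m + t)\<close>, shows that \<open>w\<close> has period \<open>(j - i) t\<close> on an interval of length
  \<open>m - i t + (j - i) t\<close>; as \<open>m \<ge> A\<close>, this is at least \<open>k (j - i) t\<close>, which yields a \<open>k\<close>-power.
\<close>

definition equal_blocks :: "nat \<Rightarrow> 'a list \<Rightarrow> nat \<Rightarrow> nat \<Rightarrow> bool" where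
  "equal_blocks m w i j \<longleftrightarrow> (\<forall>x<m. w ! (i * m + x) = w ! (j * m + x))"

lemma is_factor_take_drop: "is_factor (take l (drop a w)) w"
  unfolding is_factor_def by (metis append_take_drop_id)

lemma card_strict_pairs: "card {(i, j). i < j \<and> j < (k::nat)} = k choose 2"
proof (induction k)
  case 0
  then show ?case by simp
next
  case (Suc k)
  have split: "{(i, j). i < j \<and> j < Suc k} = {(i, j). i < j \<and> j < k} \<union> (\<lambda>i. (i, k)) ` {..<k}"
    by auto
  have "finite {(i, j). i < j \<and> j < k}"
    by (rule finite_subset[of _ "{..<k} \<times> {..<k}"]) auto
  then have "card {(i, j). i < j \<and> j < Suc k} = (k choose 2) + k"
    unfolding split using Suc by (subst card_Un_disjoint) (auto simp: card_image inj_on_def)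
  then show ?case by (simp add: numeral_2_eq_2)
qed

lemma periodic_eq_concat_replicate:
  assumes "length v = k * p" and "\<forall>q. q + p < length v \<longrightarrow> v ! q = v ! (q + p)"
  shows "v = concat (replicate k (take p v))"
  using assms
proof (induction k arbitrary: v)
  case 0
  then show ?case by simp
next
  case (Suc k)
  have "\<forall>q. q + p < length (drop p v) \<longrightarrow> drop p v ! q = drop p v ! (q + p)"
    using Suc.prems by (auto simp: add.assoc)
  then have "drop p v = concat (replicate k (take p (drop p v)))"
    using Suc.prems(1) by (intro Suc.IH) auto
  moreover have "k = 0 \<or> take p (drop p v) = take p v"
    using Suc.prems by (cases k) (auto intro!: nth_equalityI simp: add.commute)
  ultimately have "drop p v = concat (replicate k (take p v))"
    by auto
  then show ?case
    by (metis append_take_drop_id concat.simps(2) replicate_Suc)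
qed

lemma is_power_if_periodic:
  assumes "0 < k" "0 < p" "a + k * p \<le> length w"
    and "\<forall>q. a \<le> q \<and> q + p < a + k * p \<longrightarrow> w ! q = w ! (q + p)"
  shows "is_power k (take (k * p) (drop a w))"
proof -
  let ?v = "take (k * p) (drop a w)"
  have "length ?v = k * p" using assms(3) by simp
  moreover have "\<forall>q. q + p < length ?v \<longrightarrow> ?v ! q = ?v ! (q + p)"
    using assms(3,4) by (auto simp: add.assoc)
  ultimately have "?v = concat (replicate k (take p ?v))"
    by (rule periodic_eq_concat_replicate)
  moreover have "take p ?v \<noteq> []"
    using assms by (cases k) auto
  ultimately show ?thesis
    unfolding is_power_def by blast
qed

lemma take_mult_eq_concat_blocks:
  "concat (map (\<lambda>t. take m (drop (t * m) w)) [0..<k]) = take (k * m) w"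
proof (induction k)
  case 0
  then show ?case by simp
next
  case (Suc k)
  have "take (Suc k * m) w = take (k * m + m) w" by (simp add: add.commute)
  also have "\<dots> = take (k * m) w @ take m (drop (k * m) w)" by (rule take_add)
  finally show ?case using Suc by simp
qed

lemma equal_blocks_if_not_antipower:
  assumes "k * m \<le> length w" "\<not> is_antipower k (take (k * m) w)"
  shows "\<exists>i j. i < j \<and> j < k \<and> equal_blocks m w i j"
proof -
  define ws where "ws = map (\<lambda>t. take m (drop (t * m) w)) [0..<k]"
  have block_fits: "t * m + m \<le> length w" if "t < k" for t
    using that assms(1) mult_le_mono1[of "Suc t" k m] by simp
  have len: "length ws = k"
    by (simp add: ws_def)
  have "take (k * m) w = concat ws"
    unfolding ws_def by (rule take_mult_eq_concat_blocks[symmetric])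
  moreover have "\<forall>x\<in>set ws. length x = m"
    by (auto simp: ws_def dest!: block_fits)
  ultimately have "\<not> distinct ws"
    using assms(2) len unfolding is_antipower_def by blast
  then obtain a b where "a < k" "b < k" "a \<noteq> b" "ws ! a = ws ! b"
    unfolding distinct_conv_nth len by blast
  then obtain i j where ij: "i < j" "j < k" "ws ! i = ws ! j"
    by (metis linorder_neqE_nat)
  have "w ! (i * m + x) = w ! (j * m + x)" if "x < m" for x
    using arg_cong[OF ij(3), of "\<lambda>b. b ! x"] that block_fits[of i] block_fits[of j] ij
    by (simp add: ws_def)
  then show ?thesis
    unfolding equal_blocks_def using ij by blast
qed

lemma periodic_if_equal_blocks:
  assumes "equal_blocks m w i (i + d)" "equal_blocks (m + t) w i (i + d)"
    and "(i + d) * m + i * t \<le> y" "y < (i + d) * m + m"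
  shows "w ! y = w ! (y + d * t)"
proof -
  define r where "r = y - (i + d) * m - i * t"
  have y: "y = (i + d) * m + i * t + r" and r: "i * t + r < m"
    using assms(3,4) by (simp_all add: r_def)
  have "w ! (i * m + (i * t + r)) = w ! ((i + d) * m + (i * t + r))"
    using assms(1) r unfolding equal_blocks_def by blast
  moreover have "w ! (i * (m + t) + r) = w ! ((i + d) * (m + t) + r)"
    using assms(2) r unfolding equal_blocks_def by simp
  ultimately show ?thesis
    unfolding y by (simp add: algebra_simps)
qed

lemma add_mult_le_square:
  fixes i d K :: nat
  assumes "i + d \<le> K"
  shows "i + K * d \<le> K * K"
proof -
  have "K * (i + d) \<le> K * K" using assms by (rule mult_le_mono2)
  moreover have "i \<le> K * i" using assms by (cases K) auto
  moreover have "K * (i + d) = K * i + K * d" by (rule add_mult_distrib2)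
  ultimately show ?thesis by linarith
qed

lemma power_factor_if_equal_blocks:
  assumes "i < j" "j < k" "(k - 1)\<^sup>2 * t \<le> m" "k * (m + t) \<le> length w" "0 < t"
    and "equal_blocks m w i j" "equal_blocks (m + t) w i j"
  shows "\<exists>u. is_factor u w \<and> is_power k u"
proof -
  obtain d where j: "j = i + d" and "0 < d" using assms(1) less_imp_add_positive by blast
  define a where "a = j * m + i * t"
  define p where "p = d * t"
  have "0 < p" using \<open>0 < d\<close> assms(5) by (simp add: p_def)
  have "i + (k - 1) * d \<le> (k - 1) * (k - 1)"
    using assms(2) j by (intro add_mult_le_square) simp
  then have "(i + (k - 1) * d) * t \<le> (k - 1)\<^sup>2 * t"
    by (simp add: power2_eq_square)
  then have "i * t + (k - 1) * p \<le> m"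
    using assms(3) by (simp add: p_def algebra_simps)
  then have fits: "a + (k - 1) * p \<le> j * m + m"
    unfolding a_def by linarith
  have "j * m + m \<le> k * m"
    using assms(2) mult_le_mono1[of "Suc j" k m] by simp
  moreover have "d * t \<le> k * t"
    using assms(2) j by (intro mult_le_mono1) simp
  ultimately have "j * m + m + d * t \<le> k * (m + t)"
    using add_mult_distrib2[of k m t] by linarith
  then have "a + k * p \<le> length w"
    using fits assms(2,4) by (cases k) (simp_all add: p_def)
  moreover have "\<forall>q. a \<le> q \<and> q + p < a + k * p \<longrightarrow> w ! q = w ! (q + p)"
  proof (intro allI impI)
    fix q assume "a \<le> q \<and> q + p < a + k * p"
    then have "a \<le> q" "q < j * m + m"
      using fits assms(2) by (cases k; simp)+
    then show "w ! q = w ! (q + p)"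
      using assms(6,7) j unfolding a_def p_def by (intro periodic_if_equal_blocks) simp_all
  qed
  ultimately have "is_power k (take (k * p) (drop a w))"
    using assms(2) \<open>0 < p\<close> by (intro is_power_if_periodic) simp_all
  then show ?thesis
    using is_factor_take_drop by blast
qed

lemma power_or_antipower_factor:
  fixes w :: "'a list"
  assumes "1 < k" and "k * ((k choose 2) * (k - 1)\<^sup>2 + (k choose 2)) \<le> length w"
  shows "\<exists>u. is_factor u w \<and> (is_power k u \<or> is_antipower k u)"
proof (rule ccontr)
  assume none: "\<not> ?thesis"
  define n where "n = k choose 2"
  define A where "A = n * (k - 1)\<^sup>2"
  define S where "S = {(i, j). i < j \<and> j < (k::nat)}"
  have "\<forall>m\<in>{A..A+n}. \<exists>ij\<in>S. equal_blocks m w (fst ij) (snd ij)"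
  proof
    fix m assume "m \<in> {A..A+n}"
    then have "k * m \<le> k * (A + n)"
      by (intro mult_le_mono2) simp
    then have "k * m \<le> length w"
      using assms(2) by (unfold A_def n_def) linarith
    moreover have "\<not> is_antipower k (take (k * m) w)"
      using none is_factor_take_drop[of "k * m" 0 w] by auto
    ultimately obtain i j where "i < j" "j < k" "equal_blocks m w i j"
      using equal_blocks_if_not_antipower by blast
    then show "\<exists>ij\<in>S. equal_blocks m w (fst ij) (snd ij)"
      unfolding S_def by force
  qed
  then obtain P where P: "\<And>m. m \<in> {A..A+n} \<Longrightarrow> P m \<in> S \<and> equal_blocks m w (fst (P m)) (snd (P m))"
    by metis
  have "finite S" unfolding S_def
    by (rule finite_subset[of _ "{..<k} \<times> {..<k}"]) auto
  moreover have "card S < card {A..A+n}"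
    using card_strict_pairs[of k] by (simp add: S_def n_def)
  ultimately have "\<not> inj_on P {A..A+n}"
    using card_inj_on_le[of P "{A..A+n}" S] P by fastforce
  then obtain m m' where m: "m \<in> {A..A+n}" "m' \<in> {A..A+n}" "m < m'" "P m = P m'"
    unfolding inj_on_def by (metis linorder_neqE_nat)
  then obtain t where t: "m' = m + t" "0 < t"
    using less_imp_add_positive by blast
  obtain i j where ij: "P m = (i, j)" by fastforce
  have "A \<le> m" "m + t \<le> A + n"
    using m(1,2) t(1) by simp_all
  then have "t \<le> n"
    by linarith
  then have "(k - 1)\<^sup>2 * t \<le> (k - 1)\<^sup>2 * n"
    by (rule mult_le_mono2)
  also have "\<dots> \<le> m"
    using \<open>A \<le> m\<close> unfolding A_def by (metis mult.commute)
  finally have "(k - 1)\<^sup>2 * t \<le> m" .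
  moreover have "k * (m + t) \<le> length w"
    using mult_le_mono2[OF \<open>m + t \<le> A + n\<close>, of k] assms(2) by (unfold A_def n_def) linarith
  moreover have "i < j" "j < k" "equal_blocks m w i j" "equal_blocks (m + t) w i j"
    using P[OF m(1)] P[OF m(2)] m(4) ij t(1) by (auto simp: S_def)
  ultimately have "\<exists>u. is_factor u w \<and> is_power k u"
    using t(2) by (intro power_factor_if_equal_blocks[of i j k t m w])
  then show False
    using none by blast
qed

lemma cubic_bound:
  assumes "1 < (k::nat)"
  shows "k * ((k choose 2) * (k - 1)\<^sup>2 + (k choose 2)) \<le> (k^3 - k^2 + k) * (k choose 2)"
proof -
  obtain K where k: "k = Suc K" using assms by (cases k) auto
  have "k * ((k - 1)\<^sup>2 + 1) \<le> k^3 - k^2 + k"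
    unfolding k by (simp add: power2_eq_square power3_eq_cube algebra_simps)
  then show ?thesis
    by (metis add_mult_distrib mult.assoc mult.commute mult_1 mult_le_mono1)
qed

theorem corollary3p10:
  fixes alpha k :: nat
  assumes "alpha > 0" and "k > 1"
  shows "N_pow_anti alpha k \<le> (k^3 - k^2 + k) * (k choose 2)"
proof -
  let ?L = "(k^3 - k^2 + k) * (k choose 2)"
  have "k choose 2 > 0" and "k^3 - k^2 + k > 0"
    using assms(2) by (simp, linarith)
  then have "?L > 0"
    by simp
  moreover have "\<forall>w. length w = ?L \<and> set w \<subseteq> {..<alpha} \<longrightarrow>
      (\<exists>u. is_factor u w \<and> (is_power k u \<or> is_antipower k u))"
  proof (intro allI impI)
    fix w :: "nat list"
    assume "length w = ?L \<and> set w \<subseteq> {..<alpha}"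
    then show "\<exists>u. is_factor u w \<and> (is_power k u \<or> is_antipower k u)"
      using cubic_bound[OF assms(2)] by (intro power_or_antipower_factor[OF assms(2)]) simp
  qed
  ultimately show ?thesis
    unfolding N_pow_anti_def by (intro Least_le) blast
qed

end
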